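(* Let $0<q<1$, $I=[0,b)$ with $0<b\le\infty$, and let $u_0:I\to\mathbb{R}$ be continuous with $1-(1-q)tu_0(t)>0$ and $1+(1-q)tu_0(qt)>0$ for all $t\in I$. Put $$V(x)=\partial_qu_0(x)+u_0(x)u_0(qx),\qquad x\in I\setminus\{0\}.$$ Then for all constants $D,F\in\mathbb{R}$ the function $$\psi(x)=\exp\Big(-\frac{1}{1-q}\int_0^x\frac{\ln(1-(1-q)tu_0(t))}{t}d_qt\Big)\Big[D+F\int_0^x\frac{1}{1-(1-q)tu_0(t)}\exp\Big(\frac{1}{1-q}\int_0^t\frac1s\ln\frac{1-(1-q)su_0(s)}{1+(1-q)su_0(qs)}d_qs\Big)d_qt\Big]$$ solves the $q$-difference Schrödinger equation $-\partial_q^2\psi(x)+V(x)\psi(x)=0$ on $I\setminus\{0\}$ (here $\partial_q^2\psi$ is computed by first taking $\partial_q\psi$ on $I\setminus\{0\}$ and extending it by continuity to $0$, where it exists), with $\psi(0)=D$.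
   Context: $\partial_q f(x)=\dfrac{f(x)-f(qx)}{(1-q)x}$ for $x\neq0$; $\int_0^x f(t)\,d_qt=\sum_{n\ge0}(1-q)q^nx\,f(q^nx)$ (Jackson $q$-integral). *)

theory Defs
  imports Complex_Main "HOL-Library.Extended_Real"
begin

definition qder :: "real \<Rightarrow> (real \<Rightarrow> real) \<Rightarrow> real \<Rightarrow> real" where
  "qder q f x = (f x - f (q * x)) / ((1 - q) * x)"

definition qint :: "real \<Rightarrow> (real \<Rightarrow> real) \<Rightarrow> real \<Rightarrow> real" where
  "qint q f x = (\<Sum>n. (1 - q) * q ^ n * x * f (q ^ n * x))"

end

theory Submission
  imports Defs "HOL-Analysis.Elementary_Metric_Spaces"
begin

text \<open>
  Put a(t) = 1 - (1-q) t u0(t) and c(t) = 1 + (1-q) t u0(qt). A convergent Jackson integral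
  I(y) = int_0^y f d_qt satisfies I(y) = (1-q) y f(y) + I(qy), so partial_q I = f, and the two
  exponential factors of psi obey P(qy) = a(y) P(y) and E(qy) = c(y)/a(y) E(y). With the q-Leibniz
  rule this gives the first-order equation partial_q psi = u0 psi + F W for W = P E, where
  W(qy) = c(y) W(y); applying partial_q once more and eliminating psi(qy) and W(qy) yields
  partial_q^2 psi = V psi. All series converge because every integrand is bounded on (0, x]:
  ln(1 + t w(t)) / t is bounded whenever w is continuous and 1 + t w(t) > 0 on [0, x].
\<close>

definition qint_summable :: "real \<Rightarrow> (real \<Rightarrow> real) \<Rightarrow> real \<Rightarrow> bool" where
  "qint_summable q f x \<longleftrightarrow> summable (\<lambda>n. (1 - q) * q ^ n * x * f (q ^ n * x))"

lemma qint_zero [simp]: "qint q f 0 = 0"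
  by (simp add: qint_def)

lemma qint_shift:
  assumes "qint_summable q f y"
  shows "qint q f y = (1 - q) * y * f y + qint q f (q * y)"
proof -
  have "(\<lambda>n. (1 - q) * q ^ Suc n * y * f (q ^ Suc n * y))
      = (\<lambda>n. (1 - q) * q ^ n * (q * y) * f (q ^ n * (q * y)))"
    by (simp add: mult_ac)
  then show ?thesis
    using suminf_split_head[OF assms[unfolded qint_summable_def]] by (simp add: qint_def)
qed

lemma qder_shift:
  assumes "q \<noteq> 1" "y \<noteq> 0"
  shows "f (q * y) = f y - (1 - q) * y * qder q f y"
  using assms by (simp add: qder_def)

lemma qder_qint:
  assumes "qint_summable q f y" "q \<noteq> 1" "y \<noteq> 0"
  shows "qder q (qint q f) y = f y"
  using assms by (simp add: qder_def qint_shift[OF assms(1)])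

lemma qder_mult: "qder q (\<lambda>x. f x * g x) y = qder q f y * g y + f (q * y) * qder q g y"
proof -
  have "f y * g y - f (q * y) * g (q * y) = (f y - f (q * y)) * g y + f (q * y) * (g y - g (q * y))"
    by (simp add: algebra_simps)
  then show ?thesis
    by (simp add: qder_def add_divide_distrib)
qed

lemma exp_qint_shift:
  assumes "qint_summable q f y"
  shows "exp (k * qint q f y) = exp (k * (1 - q) * y * f y) * exp (k * qint q f (q * y))"
  by (simp add: qint_shift[OF assms] distrib_left mult.assoc flip: exp_add)

lemma
  fixes f :: "real \<Rightarrow> real"
  assumes q: "0 < q" "q < 1" and y: "y \<in> {0<..x}" and bound: "\<forall>t\<in>{0<..x}. \<bar>f t\<bar> \<le> K"
  shows qint_summable_if_bounded: "qint_summable q f y"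
    and abs_qint_le: "\<bar>qint q f y\<bar> \<le> K * y"
proof -
  have term_le: "norm ((1 - q) * q ^ n * y * f (q ^ n * y)) \<le> (1 - q) * y * K * q ^ n" for n
  proof -
    have "q ^ n \<le> 1"
      using q by (simp add: power_le_one)
    then have "q ^ n * y \<le> y"
      using q y by (intro mult_left_le_one_le) auto
    moreover have "0 < q ^ n * y"
      using q y by simp
    ultimately have "q ^ n * y \<in> {0<..x}"
      using y by (simp del: mult_le_cancel_right1)
    then have "\<bar>f (q ^ n * y)\<bar> \<le> K"
      using bound by blast
    then have "(1 - q) * q ^ n * y * \<bar>f (q ^ n * y)\<bar> \<le> (1 - q) * q ^ n * y * K"
      using q y by (intro mult_left_mono) auto
    then show ?thesis
      using q y by (simp add: abs_mult mult_ac)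
  qed
  have geometric: "(\<lambda>n. (1 - q) * y * K * q ^ n) sums ((1 - q) * y * K * (1 / (1 - q)))"
    using q by (intro sums_mult geometric_sums) auto
  have norm_summable: "summable (\<lambda>n. norm ((1 - q) * q ^ n * y * f (q ^ n * y)))"
    by (rule summable_comparison_test[OF _ sums_summable[OF geometric]]) (use term_le in simp)
  then show "qint_summable q f y"
    unfolding qint_summable_def by (rule summable_norm_cancel)
  have "\<bar>qint q f y\<bar> \<le> (\<Sum>n. norm ((1 - q) * q ^ n * y * f (q ^ n * y)))"
    unfolding qint_def using summable_norm[OF norm_summable] by simp
  also have "\<dots> \<le> (1 - q) * y * K * (1 / (1 - q))"
    using suminf_le[OF term_le norm_summable sums_summable[OF geometric]] sums_unique[OF geometric]
    by simp
  also have "\<dots> = K * y"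
    using q by simp
  finally show "\<bar>qint q f y\<bar> \<le> K * y" .
qed

lemma abs_ln_le:
  fixes z m :: real
  assumes "0 < m" "m \<le> z"
  shows "\<bar>ln z\<bar> \<le> \<bar>z - 1\<bar> / min m 1"
proof (cases "1 \<le> z")
  case True
  have "\<bar>ln z\<bar> \<le> z - 1"
    using True assms by (simp add: ln_le_minus_one)
  also have "\<dots> \<le> (z - 1) / min m 1"
    using True assms by (simp add: le_divide_eq mult_right_le_one_le)
  finally show ?thesis
    using True by simp
next
  case False
  have "\<bar>ln z\<bar> = ln (1 / z)"
    using False assms by (simp add: ln_div)
  also have "\<dots> \<le> 1 / z - 1"
    using assms by (intro ln_le_minus_one) auto
  also have "\<dots> = (1 - z) / z"
    using assms by (simp add: field_simps)
  also have "\<dots> \<le> (1 - z) / min m 1"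
    using False assms by (intro divide_left_mono) (auto simp: min_def)
  finally show ?thesis
    using False by simp
qed

lemma compact_pos_bounded_below:
  fixes f :: "'a::topological_space \<Rightarrow> real"
  assumes "compact S" "continuous_on S f" "\<forall>t\<in>S. 0 < f t"
  shows "\<exists>m>0. \<forall>t\<in>S. m \<le> f t"
proof (cases "S = {}")
  case False
  then obtain t0 where "t0 \<in> S" "\<forall>t\<in>S. f t0 \<le> f t"
    using continuous_attains_inf[OF assms(1) _ assms(2)] by blast
  then show ?thesis
    using assms(3) by blast
qed (auto intro: exI[of _ 1])

lemma bounded_ln_one_plus_div:
  fixes w :: "real \<Rightarrow> real"
  assumes cont: "continuous_on {0..x} w" and pos: "\<forall>t\<in>{0..x}. 0 < 1 + t * w t"
  shows "\<exists>K. \<forall>t\<in>{0<..x}. \<bar>ln (1 + t * w t) / t\<bar> \<le> K"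
proof -
  obtain M where M: "\<And>t. t \<in> {0..x} \<Longrightarrow> \<bar>w t\<bar> \<le> M"
    using continuous_on_compact_bound[OF compact_Icc cont] by auto
  have "continuous_on {0..x} (\<lambda>t. 1 + t * w t)"
    using cont by (intro continuous_intros)
  then obtain m where "m > 0" and m: "\<forall>t\<in>{0..x}. m \<le> 1 + t * w t"
    using compact_pos_bounded_below[OF compact_Icc _ pos] by blast
  have "\<bar>ln (1 + t * w t) / t\<bar> \<le> M / min m 1" if t: "t \<in> {0<..x}" for t
  proof -
    have "\<bar>ln (1 + t * w t)\<bar> \<le> \<bar>t * w t\<bar> / min m 1"
      using abs_ln_le[OF \<open>m > 0\<close>, of "1 + t * w t"] m t by simp
    also have "\<dots> \<le> t * M / min m 1"
      using \<open>m > 0\<close> t M[of t] by (intro divide_right_mono) (auto simp: abs_mult intro: mult_left_mono)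
    finally show ?thesis
      using t by (simp add: abs_div divide_le_eq mult.commute)
  qed
  then show ?thesis by blast
qed

lemma bounded_exp_qint:
  fixes f :: "real \<Rightarrow> real"
  assumes "0 < q" "q < 1" and bound: "\<forall>t\<in>{0<..x}. \<bar>f t\<bar> \<le> K"
  shows "\<exists>L. \<forall>t\<in>{0<..x}. exp (k * qint q f t) \<le> L"
proof -
  have "exp (k * qint q f t) \<le> exp (\<bar>k\<bar> * (\<bar>K\<bar> * x))" if t: "t \<in> {0<..x}" for t
  proof -
    have "K * t \<le> \<bar>K\<bar> * x"
      using t by (intro mult_mono) auto
    then have qint_le: "\<bar>qint q f t\<bar> \<le> \<bar>K\<bar> * x"
      using abs_qint_le[OF assms(1,2) t bound] by linarith
    have "k * qint q f t \<le> \<bar>k\<bar> * \<bar>qint q f t\<bar>"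
      by (metis abs_ge_self abs_mult)
    also have "\<dots> \<le> \<bar>k\<bar> * (\<bar>K\<bar> * x)"
      using qint_le by (simp add: mult_left_mono)
    finally show ?thesis by simp
  qed
  then show ?thesis by blast
qed

lemma qder_mult_first_order:
  assumes "q \<noteq> 1" "y \<noteq> 0" "a y \<noteq> 0" and a_eq: "a y = 1 - (1 - q) * y * u y"
    and shift: "P (q * y) = a y * P y" and deriv: "qder q G y = E y / a y"
  shows "qder q (\<lambda>t. P t * (D + F * G t)) y = u y * (P y * (D + F * G y)) + F * (P y * E y)"
proof -
  have "P y - P (q * y) = (1 - q) * y * (u y * P y)"
    by (simp add: shift a_eq algebra_simps)
  then have "qder q P y = u y * P y"
    using assms(1,2) by (simp add: qder_def)
  moreover have "qder q (\<lambda>t. D + F * G t) y = F * qder q G y"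
    by (simp add: qder_def right_diff_distrib)
  ultimately show ?thesis
    using assms by (simp add: qder_mult deriv)
qed

lemma qder_qder_eq_of_first_order:
  assumes "q \<noteq> 1" "y \<noteq> 0"
    and "qder q \<psi> y = u y * \<psi> y + F * W y"
    and "qder q \<psi> (q * y) = u (q * y) * \<psi> (q * y) + F * W (q * y)"
    and "W (q * y) = (1 + (1 - q) * y * u (q * y)) * W y"
  shows "qder q (qder q \<psi>) y = (qder q u y + u y * u (q * y)) * \<psi> y"
proof -
  have "\<psi> (q * y) = \<psi> y - (1 - q) * y * (u y * \<psi> y + F * W y)"
    using qder_shift[OF assms(1,2)] assms(3) by metis
  then have "qder q \<psi> (q * y) = u (q * y) * (\<psi> y - (1 - q) * y * (u y * \<psi> y + F * W y))
      + F * ((1 + (1 - q) * y * u (q * y)) * W y)"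
    by (simp only: assms(4,5))
  then have "qder q \<psi> y - qder q \<psi> (q * y)
      = (u y - u (q * y)) * \<psi> y + (1 - q) * y * (u y * u (q * y) * \<psi> y)"
    by (simp add: assms(3) algebra_simps)
  then show ?thesis
    using assms(1,2) by (simp add: qder_def[of q "qder q \<psi>"] qder_def[of q u] field_simps)
qed

locale q_riccati =
  fixes q x :: real and u :: "real \<Rightarrow> real"
  assumes q_pos: "0 < q" and q_less_one: "q < 1"
    and u_cont: "continuous_on {0..x} u"
    and a_pos: "\<forall>t\<in>{0..x}. 0 < 1 - (1 - q) * t * u t"
    and c_pos: "\<forall>t\<in>{0..x}. 0 < 1 + (1 - q) * t * u (q * t)"
begin

definition a :: "real \<Rightarrow> real" where
  "a t = 1 - (1 - q) * t * u t"

definition c :: "real \<Rightarrow> real" where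
  "c t = 1 + (1 - q) * t * u (q * t)"

definition P :: "real \<Rightarrow> real" where
  "P t = exp (- (1 / (1 - q)) * qint q (\<lambda>s. ln (a s) / s) t)"

definition E :: "real \<Rightarrow> real" where
  "E t = exp ((1 / (1 - q)) * qint q (\<lambda>s. (1 / s) * ln (a s / c s)) t)"

definition g :: "real \<Rightarrow> real" where
  "g t = (1 / a t) * E t"

definition psi :: "real \<Rightarrow> real \<Rightarrow> real \<Rightarrow> real" where
  "psi D F t = P t * (D + F * qint q g t)"

lemma a_positive: "t \<in> {0..x} \<Longrightarrow> 0 < a t"
  using a_pos by (simp add: a_def)

lemma c_positive: "t \<in> {0..x} \<Longrightarrow> 0 < c t"
  using c_pos by (simp add: c_def)

lemma ln_a_div_bounded: "\<exists>K. \<forall>t\<in>{0<..x}. \<bar>ln (a t) / t\<bar> \<le> K"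
proof -
  have "continuous_on {0..x} (\<lambda>t. - (1 - q) * u t)"
    using u_cont by (intro continuous_intros)
  moreover have a_eq: "a t = 1 + t * (- (1 - q) * u t)" for t
    by (simp add: a_def algebra_simps)
  ultimately show ?thesis
    using bounded_ln_one_plus_div[of x "\<lambda>t. - (1 - q) * u t"] a_positive by (simp add: a_eq)
qed

lemma ln_c_div_bounded: "\<exists>K. \<forall>t\<in>{0<..x}. \<bar>ln (c t) / t\<bar> \<le> K"
proof -
  have "q * t \<in> {0..x}" if "t \<in> {0..x}" for t
    using that q_pos q_less_one mult_left_le_one_le[of t q] by auto
  then have "continuous_on {0..x} (\<lambda>t. (1 - q) * u (q * t))"
    by (intro continuous_intros continuous_on_compose2[OF u_cont]) auto
  moreover have c_eq: "c t = 1 + t * ((1 - q) * u (q * t))" for t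
    by (simp add: c_def)
  ultimately show ?thesis
    using bounded_ln_one_plus_div[of x "\<lambda>t. (1 - q) * u (q * t)"] c_positive by (simp add: c_eq)
qed

lemma ln_quotient_div_bounded: "\<exists>K. \<forall>t\<in>{0<..x}. \<bar>(1 / t) * ln (a t / c t)\<bar> \<le> K"
proof -
  obtain Ka Kc where Ka: "\<forall>t\<in>{0<..x}. \<bar>ln (a t) / t\<bar> \<le> Ka"
    and Kc: "\<forall>t\<in>{0<..x}. \<bar>ln (c t) / t\<bar> \<le> Kc"
    using ln_a_div_bounded ln_c_div_bounded by blast
  have "\<bar>(1 / t) * ln (a t / c t)\<bar> \<le> Ka + Kc" if t: "t \<in> {0<..x}" for t
  proof -
    have "(1 / t) * ln (a t / c t) = ln (a t) / t - ln (c t) / t"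
      using a_positive[of t] c_positive[of t] t by (simp add: ln_div diff_divide_distrib)
    then show ?thesis
      using Ka Kc t abs_triangle_ineq4[of "ln (a t) / t" "ln (c t) / t"] by fastforce
  qed
  then show ?thesis by blast
qed

lemma E_bounded: "\<exists>L. \<forall>t\<in>{0<..x}. E t \<le> L"
proof -
  obtain K where "\<forall>t\<in>{0<..x}. \<bar>(1 / t) * ln (a t / c t)\<bar> \<le> K"
    using ln_quotient_div_bounded by blast
  from bounded_exp_qint[OF q_pos q_less_one this, where k = "1 / (1 - q)"] show ?thesis
    by (simp only: E_def)
qed

lemma g_bounded: "\<exists>K. \<forall>t\<in>{0<..x}. \<bar>g t\<bar> \<le> K"
proof -
  have "continuous_on {0..x} a"
    unfolding a_def[abs_def] using u_cont by (intro continuous_intros)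
  then obtain m where "m > 0" and m: "\<forall>t\<in>{0..x}. m \<le> a t"
    using compact_pos_bounded_below[OF compact_Icc] a_positive by blast
  obtain L where L: "\<forall>t\<in>{0<..x}. E t \<le> L"
    using E_bounded by blast
  have "\<bar>g t\<bar> \<le> L / m" if t: "t \<in> {0<..x}" for t
  proof -
    have "0 < E t" "0 < a t"
      using a_positive t by (auto simp: E_def)
    then have "\<bar>g t\<bar> = E t / a t"
      by (simp add: g_def)
    also have "\<dots> \<le> L / m"
    proof (rule frac_le)
      show "E t \<le> L" "m \<le> a t"
        using L m t by auto
      then show "0 \<le> L"
        using \<open>0 < E t\<close> by linarith
    qed (fact \<open>m > 0\<close>)
    finally show ?thesis .
  qed
  then show ?thesis by blast
qed

lemma integrands_summable:
  assumes "y \<in> {0<..x}"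
  shows "qint_summable q (\<lambda>s. ln (a s) / s) y"
    and "qint_summable q (\<lambda>s. (1 / s) * ln (a s / c s)) y"
    and "qint_summable q g y"
  using ln_a_div_bounded ln_quotient_div_bounded g_bounded
  by (blast intro: qint_summable_if_bounded[OF q_pos q_less_one assms])+

lemma P_shift:
  assumes "y \<in> {0<..x}"
  shows "P (q * y) = a y * P y"
proof -
  have "P y = exp (- ln (a y)) * P (q * y)"
    using exp_qint_shift[OF integrands_summable(1)[OF assms], of "- (1 / (1 - q))"]
      assms q_less_one by (simp add: P_def)
  then show ?thesis
    using a_positive[of y] assms by (simp add: exp_minus field_simps)
qed

lemma E_shift:
  assumes "y \<in> {0<..x}"
  shows "E (q * y) = c y / a y * E y"
proof -
  have "E y = exp (ln (a y / c y)) * E (q * y)"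
    using exp_qint_shift[OF integrands_summable(2)[OF assms], of "1 / (1 - q)"]
      assms q_less_one by (simp add: E_def)
  then show ?thesis
    using a_positive[of y] c_positive[of y] assms by (simp add: field_simps)
qed

lemma PE_shift:
  assumes "y \<in> {0<..x}"
  shows "P (q * y) * E (q * y) = (1 + (1 - q) * y * u (q * y)) * (P y * E y)"
  using P_shift[OF assms] E_shift[OF assms] a_positive[of y] assms by (simp add: c_def)

lemma qder_psi:
  assumes "y \<in> {0<..x}"
  shows "qder q (psi D F) y = u y * psi D F y + F * (P y * E y)"
  unfolding psi_def[abs_def]
proof (rule qder_mult_first_order)
  show "qder q (qint q g) y = E y / a y"
    using qder_qint[OF integrands_summable(3)[OF assms]] q_less_one assms by (simp add: g_def)
qed (use P_shift[OF assms] a_positive[of y] assms q_less_one in \<open>auto simp: a_def\<close>)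

end

theorem corollary1:
  fixes q :: real and b :: ereal and u0 :: "real \<Rightarrow> real" and D F :: real
  assumes hq0: "0 < q" and hq1: "q < 1" and hb: "0 < b"
    and hcont: "continuous_on {x. 0 \<le> x \<and> ereal x < b} u0"
    and hpos1: "\<forall>t\<in>{x. 0 \<le> x \<and> ereal x < b}. 1 - (1 - q) * t * u0 t > 0"
    and hpos2: "\<forall>t\<in>{x. 0 \<le> x \<and> ereal x < b}. 1 + (1 - q) * t * u0 (q * t) > 0"
  defines "V \<equiv> (\<lambda>x. qder q u0 x + u0 x * u0 (q * x))"
    and "\<psi> \<equiv> (\<lambda>x. exp (- (1 / (1 - q)) * qint q (\<lambda>t. ln (1 - (1 - q) * t * u0 t) / t) x)
            * (D + F * qint q (\<lambda>t. (1 / (1 - (1 - q) * t * u0 t))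
                 * exp ((1 / (1 - q)) * qint q (\<lambda>s. (1 / s) *
                      ln ((1 - (1 - q) * s * u0 s) / (1 + (1 - q) * s * u0 (q * s)))) t)) x))"
  shows "(\<forall>x\<in>{x. 0 \<le> x \<and> ereal x < b}. x \<noteq> 0 \<longrightarrow>
            - qder q (qder q \<psi>) x + V x * \<psi> x = 0) \<and> \<psi> 0 = D"
proof -
  let ?I = "{x. 0 \<le> x \<and> ereal x < b}"
  have "qder q (qder q \<psi>) x = V x * \<psi> x" if x: "x \<in> ?I" "x \<noteq> 0" for x
  proof -
    have "{0..x} \<subseteq> ?I"
      using x by (auto intro: le_less_trans[of _ "ereal x"])
    then interpret q_riccati q x u0
      using hq0 hq1 hpos1 hpos2 by unfold_locales (auto intro: continuous_on_subset[OF hcont])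
    have psi: "\<psi> = psi D F"
      unfolding \<psi>_def psi_def[abs_def] P_def g_def E_def a_def c_def ..
    have "x \<in> {0<..x}" "q * x \<in> {0<..x}"
      using x hq0 hq1 by auto
    then show ?thesis
      unfolding V_def psi
      by (intro qder_qder_eq_of_first_order[where W = "\<lambda>t. P t * E t" and F = F] qder_psi PE_shift)
        (use hq1 x in auto)
  qed
  then show ?thesis
    by (simp add: \<psi>_def)
qed

end
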